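(* Let $X,Y$ be strings over a binary alphabet, $\ell\ge1$, and $\mathcal{S}(\ell)$ an $\ell$-cover. Let $\mathcal{F}$ be the set of all strings occurring as a component of some pair in $\mathsf{Pairs}_\ell(X)\cup\mathsf{Pairs}_\ell(Y)$, and let $N_0(F),N_1(F)$ ($F\in\mathcal{F}$) be defined from a marking of light edges of $\mathcal{T}(\mathcal{F})$ in which every node has at most one outgoing non-light edge, as follows: $N_0(F)=\{F\}$ and $N_1(F)$ consists of $F$ and every string obtained from $F$ by choosing a light edge $(u,w)$ on the root-to-terminal path of $F$ and replacing $F[|u|+1]$ ($|u|$ the string depth of $u$) by the other letter. For $S\in\{X,Y\}$ and $d\in\{0,1\}$ let $$\mathsf{Pairs}^{(d)}_\ell(S)=\bigcup_{(U_1,U_2)\in\mathsf{Pairs}_\ell(S)}\ \bigcup_{d_1+d_2=d}\{(U_1',U_2') : U_1'\in N_{d_1}(U_1),\ U_2'\in N_{d_2}(U_2)\}.$$ If $\mathsf{LCF}_1(X,Y)\ge\ell$, then $$\mathsf{LCF}_1(X,Y)=\max_{k_1+k_2=1}\mathrm{maxPairLCP}(\mathsf{Pairs}^{(k_1)}_\ell(X),\mathsf{Pairs}^{(k_2)}_\ell(Y)).$$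
   Context: $U[i..j]$ denotes a factor, $U^R$ the reversal, $d_H$ the Hamming distance; $\mathsf{LCP}$ is the longest common prefix length; $\mathsf{LCP}_d(U,V)=\max\{p\le\min(|U|,|V|): d_H(U[1..p],V[1..p])\le d\}$. $\mathsf{LCF}_k(X,Y)$ is the maximum length of a factor of $X$ and a factor of $Y$ of equal length at Hamming distance at most $k$. A $d$-cover is a set $\mathcal{S}(d)\subseteq\mathbb{Z}_+$ with a function $h$, $0\le h(i,j)<d$, such that $i+h(i,j),j+h(i,j)\in\mathcal{S}(d)$ for all $i,j\in\mathbb{Z}_+$. $\mathsf{Pairs}_\ell(U)=\{((U[1..i-1])^R,U[i..|U|]) : i\in\mathcal{S}(\ell)\cap[1..|U|]\}$. $\mathrm{maxPairLCP}(\mathcal{P},\mathcal{Q})=\max\{\mathsf{LCP}(P_1,Q_1)+\mathsf{LCP}(P_2,Q_2):(P_1,P_2)\in\mathcal{P},(Q_1,Q_2)\in\mathcal{Q}\}$. $\mathcal{T}(\mathcal{F})$ is the compacted trie of $\mathcal{F}$ (root, branching and terminal nodes of the trie), string depth of a node = length of the string it represents. *)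

theory Defs
  imports Main "HOL-Library.Sublist"
begin

(* Strings are lists; positions in the paper are 1-based, list indices are 0-based. *)

definition hamming :: "'a list \<Rightarrow> 'a list \<Rightarrow> nat" where
  "hamming U V = card {i. i < min (length U) (length V) \<and> U ! i \<noteq> V ! i}"

definition LCP :: "'a list \<Rightarrow> 'a list \<Rightarrow> nat" where
  "LCP U V = length (longest_common_prefix U V)"

definition LCF :: "nat \<Rightarrow> 'a list \<Rightarrow> 'a list \<Rightarrow> nat" where
  "LCF k X Y = Max {m. \<exists>i j. i + m \<le> length X \<and> j + m \<le> length Y \<and>
      hamming (take m (drop i X)) (take m (drop j Y)) \<le> k}"

definition is_cover :: "nat \<Rightarrow> nat set \<Rightarrow> bool" where
  "is_cover d S \<longleftrightarrow> S \<subseteq> {1..} \<and>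
     (\<exists>h :: nat \<Rightarrow> nat \<Rightarrow> nat. \<forall>i\<ge>1. \<forall>j\<ge>1. h i j < d \<and> i + h i j \<in> S \<and> j + h i j \<in> S)"

definition Pairs :: "nat set \<Rightarrow> 'a list \<Rightarrow> ('a list \<times> 'a list) set" where
  "Pairs S U = {(rev (take (i - 1) U), drop (i - 1) U) | i. i \<in> S \<and> 1 \<le> i \<and> i \<le> length U}"

definition maxPairLCP :: "('a list \<times> 'a list) set \<Rightarrow> ('a list \<times> 'a list) set \<Rightarrow> nat" where
  "maxPairLCP P Q = Max {LCP P1 Q1 + LCP P2 Q2 | P1 P2 Q1 Q2. (P1, P2) \<in> P \<and> (Q1, Q2) \<in> Q}"

definition comps :: "('a list \<times> 'a list) set \<Rightarrow> 'a list set" where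
  "comps P = fst ` P \<union> snd ` P"

(* Nodes of the compacted trie T(F): root, branching nodes, terminal nodes
   (a node is identified with the string it represents; its string depth is its length) *)
definition trie_nodes :: "'a list set \<Rightarrow> 'a list set" where
  "trie_nodes F = {[]} \<union> F \<union>
     {u. \<exists>a b. a \<noteq> b \<and> (\<exists>x\<in>F. prefix (u @ [a]) x) \<and> (\<exists>y\<in>F. prefix (u @ [b]) y)}"

definition trie_edge :: "'a list set \<Rightarrow> 'a list \<Rightarrow> 'a list \<Rightarrow> bool" where
  "trie_edge F u w \<longleftrightarrow> u \<in> trie_nodes F \<and> w \<in> trie_nodes F \<and> strict_prefix u w \<and>
     \<not> (\<exists>v\<in>trie_nodes F. strict_prefix u v \<and> strict_prefix v w)"

definition valid_light :: "'a list set \<Rightarrow> ('a list \<times> 'a list) set \<Rightarrow> bool" where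
  "valid_light F L \<longleftrightarrow> (\<forall>(u, w)\<in>L. trie_edge F u w) \<and>
     (\<forall>u w w'. trie_edge F u w \<longrightarrow> trie_edge F u w' \<longrightarrow> (u, w) \<notin> L \<longrightarrow> (u, w') \<notin> L \<longrightarrow> w = w')"

definition N1 :: "(bool list \<times> bool list) set \<Rightarrow> bool list \<Rightarrow> bool list set" where
  "N1 L F = {F} \<union> {F[length u := \<not> F ! length u] | u w. (u, w) \<in> L \<and> prefix w F}"

definition Nbr :: "(bool list \<times> bool list) set \<Rightarrow> nat \<Rightarrow> bool list \<Rightarrow> bool list set" where
  "Nbr L d F = (if d = 0 then {F} else N1 L F)"

definition PairsD :: "(bool list \<times> bool list) set \<Rightarrow> nat set \<Rightarrow> bool list \<Rightarrow> nat
     \<Rightarrow> (bool list \<times> bool list) set" where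
  "PairsD L S U d = (\<Union>(U1, U2)\<in>Pairs S U. \<Union>(d1, d2)\<in>{(d1, d2). d1 + d2 = d}.
      {(U1', U2'). U1' \<in> Nbr L d1 U1 \<and> U2' \<in> Nbr L d2 U2})"

end

theory Submission
  imports Defs
begin

text \<open>
  Let factors of \<open>X\<close> and \<open>Y\<close> starting at \<open>i\<close> and \<open>j\<close> realise \<open>LCF\<^sub>1(X,Y) = m \<ge> \<ell>\<close>.
  The cover gives a shift \<open>h < \<ell> \<le> m\<close> with both \<open>i + h\<close> and \<open>j + h\<close> in \<open>\<S>(\<ell>)\<close>, so the
  two factors are a reversed left part and a right part read off two anchored pairs.
  The single mismatch lies in one part, the other part is an exact common prefix. In the
  mismatching part both strings leave the branching node of \<open>\<T>(\<F>)\<close> at the mismatch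
  along different edges, of which at most one is not light; flipping the letter along the
  light one yields a string in \<open>N\<^sub>1\<close> that restores the whole common prefix. Conversely,
  strings that differ in one letter in total from two anchored pairs describe factors of
  \<open>X\<close> and \<open>Y\<close> at Hamming distance at most one, by the triangle inequality.
\<close>

lemma hamming_conv_filter:
  "hamming U V = length (filter (\<lambda>(x, y). x \<noteq> y) (zip U V))"
  unfolding hamming_def length_filter_conv_card by (auto intro!: arg_cong[where f = card])

lemma hamming_commute: "hamming U V = hamming V U"
  unfolding hamming_def by (metis min.commute)

lemma hamming_append:
  "length U = length V \<Longrightarrow> hamming (U @ U') (V @ V') = hamming U V + hamming U' V'"
  by (simp add: hamming_conv_filter)

lemma hamming_rev:
  "length U = length V \<Longrightarrow> hamming (rev U) (rev V) = hamming U V"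
  by (simp add: hamming_conv_filter zip_rev rev_filter[symmetric])

lemma hamming_take_le: "hamming (take n U) (take n V) \<le> hamming U V"
proof -
  have "hamming (take n U) (take n V) = length (filter (\<lambda>(x, y). x \<noteq> y) (take n (zip U V)))"
    by (simp add: hamming_conv_filter take_zip)
  also have "\<dots> \<le> hamming U V"
    unfolding hamming_conv_filter by (metis append_take_drop_id filter_append length_append le_add1)
  finally show ?thesis .
qed

lemma hamming_triangle:
  assumes "length U = length V" "length V = length W"
  shows "hamming U W \<le> hamming U V + hamming V W"
proof -
  let ?D = "\<lambda>A B. {i. i < length U \<and> A ! i \<noteq> B ! i}"
  have "hamming U W = card (?D U W)" "hamming U V = card (?D U V)" "hamming V W = card (?D V W)"
    using assms by (simp_all add: hamming_def)
  moreover have "card (?D U W) \<le> card (?D U V \<union> ?D V W)"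
    by (intro card_mono) auto
  moreover have "card (?D U V \<union> ?D V W) \<le> card (?D U V) + card (?D V W)"
    by (rule card_Un_le)
  ultimately show ?thesis by linarith
qed

lemma hamming_eq_0_iff: "length U = length V \<Longrightarrow> hamming U V = 0 \<longleftrightarrow> U = V"
  by (auto simp: hamming_def list_eq_iff_nth_eq)

lemma hamming_list_update_le: "hamming xs (xs[j := x]) \<le> 1"
proof -
  have "{i. i < min (length xs) (length (xs[j := x])) \<and> xs ! i \<noteq> xs[j := x] ! i} \<subseteq> {j}"
    by (clarsimp, metis nth_list_update_neq)
  then have "card {i. i < min (length xs) (length (xs[j := x])) \<and> xs ! i \<noteq> xs[j := x] ! i} \<le> card {j}"
    by (intro card_mono) auto
  then show ?thesis unfolding hamming_def by simp
qed

lemma hamming_le_1_elsewhere_eq: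
  assumes "length U = length V" "hamming U V \<le> 1" "c < length U" "U ! c \<noteq> V ! c"
    "k < length U" "k \<noteq> c"
  shows "U ! k = V ! k"
proof (rule ccontr)
  assume "U ! k \<noteq> V ! k"
  then have "{c, k} \<subseteq> {i. i < min (length U) (length V) \<and> U ! i \<noteq> V ! i}"
    using assms by auto
  then have "card {c, k} \<le> hamming U V"
    unfolding hamming_def by (intro card_mono) auto
  then show False using assms by simp
qed

lemma take_prefix_eq: "prefix p U \<Longrightarrow> k \<le> length p \<Longrightarrow> take k U = take k p"
  by (auto simp: prefix_def)

lemma le_LCP_iff:
  "k \<le> LCP U V \<longleftrightarrow> k \<le> length U \<and> k \<le> length V \<and> take k U = take k V"
proof -
  let ?p = "longest_common_prefix U V"
  have pU: "prefix ?p U" and pV: "prefix ?p V"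
    by (rule longest_common_prefix_prefix1 longest_common_prefix_prefix2)+
  show ?thesis
  proof
    assume "k \<le> LCP U V"
    then have k: "k \<le> length ?p" by (simp add: LCP_def)
    then show "k \<le> length U \<and> k \<le> length V \<and> take k U = take k V"
      using take_prefix_eq[OF pU k] take_prefix_eq[OF pV k]
        prefix_length_le[OF pU] prefix_length_le[OF pV] by simp
  next
    assume k: "k \<le> length U \<and> k \<le> length V \<and> take k U = take k V"
    then have "prefix (take k U) ?p"
      by (metis longest_common_prefix_max_prefix take_is_prefix)
    then show "k \<le> LCP U V"
      using k prefix_length_le unfolding LCP_def by fastforce
  qed
qed

lemma window_eq_rev_take_append:
  assumes "s \<le> a" "a \<le> length X"
  shows "take (s + t) (drop (a - s) X) = rev (take s (rev (take a X))) @ take t (drop a X)"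
proof -
  have "take (s + t) (drop (a - s) X) = take s (drop (a - s) X) @ take t (drop s (drop (a - s) X))"
    by (rule take_add)
  moreover have "take s (drop (a - s) X) = drop (a - s) (take a X)"
    using assms by (simp add: take_drop)
  moreover have "drop s (drop (a - s) X) = drop a X"
    using assms by simp
  ultimately show ?thesis
    using assms by (simp add: take_rev min_absorb2)
qed

lemma hamming_window_split:
  assumes "s \<le> a" "a \<le> length X" "s \<le> b" "b \<le> length Y"
  shows "hamming (take (s + t) (drop (a - s) X)) (take (s + t) (drop (b - s) Y)) =
    hamming (take s (rev (take a X))) (take s (rev (take b Y))) +
    hamming (take t (drop a X)) (take t (drop b Y))"
  using assms by (simp add: window_eq_rev_take_append hamming_append hamming_rev)

lemma LCF_set_finite:
  "finite {m. \<exists>i j. i + m \<le> length X \<and> j + m \<le> length Y \<and>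
      hamming (take m (drop i X)) (take m (drop j Y)) \<le> k}"
  by (rule finite_subset[of _ "{..length X}"]) auto

lemma le_LCF:
  assumes "i + m \<le> length X" "j + m \<le> length Y"
    and "hamming (take m (drop i X)) (take m (drop j Y)) \<le> k"
  shows "m \<le> LCF k X Y"
  unfolding LCF_def using assms by (intro Max_ge[OF LCF_set_finite]) blast

lemma LCF_attained:
  "\<exists>i j. i + LCF k X Y \<le> length X \<and> j + LCF k X Y \<le> length Y \<and>
     hamming (take (LCF k X Y) (drop i X)) (take (LCF k X Y) (drop j Y)) \<le> k"
proof -
  have "0 \<in> {m. \<exists>i j. i + m \<le> length X \<and> j + m \<le> length Y \<and>
      hamming (take m (drop i X)) (take m (drop j Y)) \<le> k}"
    by (auto simp: hamming_def)
  then show ?thesis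
    unfolding LCF_def using Max_in[OF LCF_set_finite, of X Y k] by blast
qed

lemma hamming_take_le_of_LCP:
  assumes "n \<le> LCP U' V'" "length U = length U'" "length V = length V'"
  shows "hamming (take n U) (take n V) \<le> hamming U U' + hamming V V'"
proof -
  have n: "n \<le> length U" "n \<le> length V" and eq: "take n U' = take n V'"
    using assms le_LCP_iff[of n U' V'] by auto
  have "hamming (take n U) (take n V) \<le> hamming (take n U) (take n U') + hamming (take n U') (take n V)"
    using n assms(2,3) by (intro hamming_triangle) auto
  also have "\<dots> = hamming (take n U) (take n U') + hamming (take n V) (take n V')"
    by (simp add: eq hamming_commute)
  also have "\<dots> \<le> hamming U U' + hamming V V'"
    by (intro add_mono hamming_take_le)
  finally show ?thesis .
qed

lemma LCP_sum_le_LCF: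
  assumes "a \<le> length X" "b \<le> length Y"
    and "length P1 = a" "length P2 = length X - a" "length Q1 = b" "length Q2 = length Y - b"
    and "hamming (rev (take a X)) P1 + hamming (drop a X) P2 +
         (hamming (rev (take b Y)) Q1 + hamming (drop b Y) Q2) \<le> k"
  shows "LCP P1 Q1 + LCP P2 Q2 \<le> LCF k X Y"
proof -
  define s t where "s = LCP P1 Q1" and "t = LCP P2 Q2"
  have st: "s \<le> a" "s \<le> b" "t \<le> length X - a" "t \<le> length Y - b"
    using assms(3-6) le_LCP_iff[of s P1 Q1] le_LCP_iff[of t P2 Q2] unfolding s_def t_def by auto
  have "hamming (take (s + t) (drop (a - s) X)) (take (s + t) (drop (b - s) Y)) =
    hamming (take s (rev (take a X))) (take s (rev (take b Y))) +
    hamming (take t (drop a X)) (take t (drop b Y))"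
    using st assms(1,2) by (intro hamming_window_split)
  also have "\<dots> \<le> (hamming (rev (take a X)) P1 + hamming (rev (take b Y)) Q1) +
      (hamming (drop a X) P2 + hamming (drop b Y) Q2)"
    using assms unfolding s_def t_def by (intro add_mono hamming_take_le_of_LCP) auto
  also have "\<dots> \<le> k"
    using assms(7) by linarith
  finally show ?thesis
    unfolding s_def[symmetric] t_def[symmetric] using st assms(1,2) by (intro le_LCF) auto
qed

lemma N1_length_hamming: "F' \<in> N1 L F \<Longrightarrow> length F' = length F \<and> hamming F F' \<le> 1"
  unfolding N1_def using hamming_list_update_le[of F] by (auto simp: hamming_def[of F F])

lemma Nbr_length_hamming: "F' \<in> Nbr L d F \<Longrightarrow> length F' = length F \<and> hamming F F' \<le> d"
  using N1_length_hamming[of F' L F]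
  by (cases "d = 0") (auto simp: Nbr_def hamming_def)

lemma Nbr_self: "F \<in> Nbr L d F"
  by (simp add: Nbr_def N1_def)

lemma PairsD_elim:
  assumes "(P1, P2) \<in> PairsD L S X d"
  obtains a where "a \<le> length X" "length P1 = a" "length P2 = length X - a"
    "hamming (rev (take a X)) P1 + hamming (drop a X) P2 \<le> d"
proof -
  obtain i d1 d2 where i: "1 \<le> i" "i \<le> length X" "d1 + d2 = d"
    "P1 \<in> Nbr L d1 (rev (take (i - 1) X))" "P2 \<in> Nbr L d2 (drop (i - 1) X)"
    using assms unfolding PairsD_def Pairs_def by auto
  then show ?thesis
    using Nbr_length_hamming[OF i(4)] Nbr_length_hamming[OF i(5)]
    by (intro that[of "i - 1"]) auto
qed

lemma PairsD_LCP_sum_le_LCF: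
  assumes "(P1, P2) \<in> PairsD L S X d" "(Q1, Q2) \<in> PairsD L S Y e"
  shows "LCP P1 Q1 + LCP P2 Q2 \<le> LCF (d + e) X Y"
proof -
  obtain a where a: "a \<le> length X" "length P1 = a" "length P2 = length X - a"
    "hamming (rev (take a X)) P1 + hamming (drop a X) P2 \<le> d"
    using assms(1) by (rule PairsD_elim)
  obtain b where b: "b \<le> length Y" "length Q1 = b" "length Q2 = length Y - b"
    "hamming (rev (take b Y)) Q1 + hamming (drop b Y) Q2 \<le> e"
    using assms(2) by (rule PairsD_elim)
  show ?thesis
    using a b by (intro LCP_sum_le_LCF) auto
qed

lemma maxPairLCP_PairsD_bounds:
  assumes "(P1, P2) \<in> PairsD L S X d" "(Q1, Q2) \<in> PairsD L S Y e"
  shows "LCP P1 Q1 + LCP P2 Q2 \<le> maxPairLCP (PairsD L S X d) (PairsD L S Y e)"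
    and "maxPairLCP (PairsD L S X d) (PairsD L S Y e) \<le> LCF (d + e) X Y"
proof -
  let ?A = "{LCP P1 Q1 + LCP P2 Q2 | P1 P2 Q1 Q2.
     (P1, P2) \<in> PairsD L S X d \<and> (Q1, Q2) \<in> PairsD L S Y e}"
  have bounded: "?A \<subseteq> {..LCF (d + e) X Y}"
    using PairsD_LCP_sum_le_LCF by fastforce
  then have "finite ?A"
    by (rule finite_subset) simp
  moreover have "LCP P1 Q1 + LCP P2 Q2 \<in> ?A"
    using assms by blast
  ultimately show "LCP P1 Q1 + LCP P2 Q2 \<le> maxPairLCP (PairsD L S X d) (PairsD L S Y e)"
    unfolding maxPairLCP_def by (rule Max_ge)
  show "maxPairLCP (PairsD L S X d) (PairsD L S Y e) \<le> LCF (d + e) X Y"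
    unfolding maxPairLCP_def
  proof (rule Max.boundedI)
    show "finite ?A" by fact
    show "?A \<noteq> {}" using \<open>_ \<in> ?A\<close> by blast
    show "\<And>x. x \<in> ?A \<Longrightarrow> x \<le> LCF (d + e) X Y" using bounded by blast
  qed
qed

lemma PairsD_intro:
  "(U1, U2) \<in> Pairs S U \<Longrightarrow> m + n = d \<Longrightarrow> U1' \<in> Nbr L m U1 \<Longrightarrow> U2' \<in> Nbr L n U2
   \<Longrightarrow> (U1', U2') \<in> PairsD L S U d"
  unfolding PairsD_def by blast

lemma Pairs_subset_PairsD: "Pairs S U \<subseteq> PairsD L S U d"
  using PairsD_intro[where m = 0 and n = d, OF _ _ Nbr_self Nbr_self] by auto

lemma PairsD_N1_fst: "(U1, U2) \<in> Pairs S U \<Longrightarrow> U1' \<in> N1 L U1 \<Longrightarrow> (U1', U2) \<in> PairsD L S U 1"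
  by (rule PairsD_intro[where m = 1 and n = 0]) (simp_all add: Nbr_def)

lemma PairsD_N1_snd: "(U1, U2) \<in> Pairs S U \<Longrightarrow> U2' \<in> N1 L U2 \<Longrightarrow> (U1, U2') \<in> PairsD L S U 1"
  by (rule PairsD_intro[where m = 0 and n = 1]) (simp_all add: Nbr_def)

lemma prefix_nth_eq: "prefix w P \<Longrightarrow> k < length w \<Longrightarrow> w ! k = P ! k"
  by (auto simp: prefix_def nth_append)

lemma trie_edge_towards:
  assumes "u \<in> trie_nodes F" "P \<in> F" "strict_prefix u P"
  obtains w where "trie_edge F u w" "prefix w P"
proof -
  let ?below = "\<lambda>v. v \<in> trie_nodes F \<and> strict_prefix u v \<and> prefix v P"
  have "?below P"
    using assms by (auto simp: trie_nodes_def)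
  then obtain w where w: "?below w" and least: "\<And>v. ?below v \<Longrightarrow> length w \<le> length v"
    using ex_has_least_nat[of ?below P length] by blast
  have "\<not> (\<exists>v\<in>trie_nodes F. strict_prefix u v \<and> strict_prefix v w)"
  proof
    assume "\<exists>v\<in>trie_nodes F. strict_prefix u v \<and> strict_prefix v w"
    then obtain v where v: "v \<in> trie_nodes F" "strict_prefix u v" "strict_prefix v w"
      by blast
    then have "length w \<le> length v"
      using w by (intro least) (meson prefix_order.dual_order.trans prefix_order.less_imp_le)
    moreover have "length v < length w"
      using v(3) by (rule prefix_length_less)
    ultimately show False by simp
  qed
  then have "trie_edge F u w"
    using w assms(1) unfolding trie_edge_def by blast
  with w show ?thesis
    by (blast intro: that)
qed

lemma light_edge_at_branching:
  assumes "valid_light F L" "P \<in> F" "Q \<in> F"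
    and "prefix (u @ [x]) P" "prefix (u @ [y]) Q" "x \<noteq> y"
  shows "(\<exists>w. (u, w) \<in> L \<and> prefix w P) \<or> (\<exists>w. (u, w) \<in> L \<and> prefix w Q)"
proof -
  have node: "u \<in> trie_nodes F"
    using assms(2-6) unfolding trie_nodes_def by blast
  have "strict_prefix u P" "strict_prefix u Q"
    using assms(4,5) by (auto simp: strict_prefix_def prefix_def)
  then obtain wP wQ where wP: "trie_edge F u wP" "prefix wP P" and wQ: "trie_edge F u wQ" "prefix wQ Q"
    by (meson trie_edge_towards[OF node assms(2)] trie_edge_towards[OF node assms(3)])
  have "length u < length wP" "length u < length wQ"
    using wP(1) wQ(1) unfolding trie_edge_def by (auto intro: prefix_length_less)
  moreover have "P ! length u = x" "Q ! length u = y"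
    using prefix_nth_eq[OF assms(4), of "length u"] prefix_nth_eq[OF assms(5), of "length u"]
    by simp_all
  ultimately have "wP ! length u = x" "wQ ! length u = y"
    using prefix_nth_eq[OF wP(2)] prefix_nth_eq[OF wQ(2)] by simp_all
  then have "wP \<noteq> wQ"
    using assms(6) by auto
  then have "(u, wP) \<in> L \<or> (u, wQ) \<in> L"
    using assms(1) wP(1) wQ(1) unfolding valid_light_def by blast
  then show ?thesis
    using wP(2) wQ(2) by blast
qed

lemma flip_in_N1: "(u, w) \<in> L \<Longrightarrow> prefix w P \<Longrightarrow> P[length u := \<not> P ! length u] \<in> N1 L P"
  unfolding N1_def by blast

lemma take_flip_eq:
  fixes P Q :: "bool list"
  assumes "c < h" "h \<le> length P" "h \<le> length Q" "P ! c \<noteq> Q ! c"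
    and "hamming (take h P) (take h Q) \<le> 1"
  shows "take h (P[c := \<not> P ! c]) = take h Q"
proof (rule nth_equalityI)
  fix k assume "k < length (take h (P[c := \<not> P ! c]))"
  then have k: "k < h" using assms(2) by simp
  show "take h (P[c := \<not> P ! c]) ! k = take h Q ! k"
  proof (cases "k = c")
    case True
    then show ?thesis using assms k by auto
  next
    case False
    then have "take h P ! k = take h Q ! k"
      using assms k by (intro hamming_le_1_elsewhere_eq[of _ _ c]) auto
    then show ?thesis using False k assms(2) by simp
  qed
qed (use assms in simp)

lemma N1_flip_LCP:
  fixes P Q :: "bool list"
  assumes "valid_light F L" "P \<in> F" "Q \<in> F" "h \<le> length P" "h \<le> length Q"
    and "hamming (take h P) (take h Q) \<le> 1"
  obtains P' Q' where "P' \<in> N1 L P" "Q' \<in> N1 L Q" "P' = P \<or> Q' = Q" "h \<le> LCP P' Q'"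
proof (cases "take h P = take h Q")
  case True
  then show ?thesis
    using assms(4,5) by (intro that[of P Q]) (auto simp: le_LCP_iff N1_def)
next
  case False
  let ?mismatch = "\<lambda>k. k < h \<and> P ! k \<noteq> Q ! k"
  define c where "c = (LEAST k. ?mismatch k)"
  have "\<exists>k. ?mismatch k"
    using False assms(4,5) by (auto simp: list_eq_iff_nth_eq)
  then have "?mismatch c"
    unfolding c_def by (rule LeastI_ex)
  then have c: "c < h" "P ! c \<noteq> Q ! c"
    by simp_all
  have "take c P = take c Q"
    using not_less_Least[of _ ?mismatch] c assms(4,5) unfolding c_def[symmetric]
    by (auto intro!: nth_equalityI)
  moreover have "take (Suc c) P = take c P @ [P ! c]" "take (Suc c) Q = take c Q @ [Q ! c]"
    using c assms(4,5) by (simp_all add: take_Suc_conv_app_nth)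
  ultimately have "prefix (take c P @ [P ! c]) P" "prefix (take c P @ [Q ! c]) Q"
    by (metis take_is_prefix)+
  moreover have lc: "length (take c P) = c"
    using c assms(4) by simp
  ultimately consider (light_P) w where "(take c P, w) \<in> L" "prefix w P"
    | (light_Q) w where "(take c P, w) \<in> L" "prefix w Q"
    using light_edge_at_branching[OF assms(1-3) _ _ c(2)] by blast
  then show ?thesis
  proof cases
    case light_P
    have "take h (P[c := \<not> P ! c]) = take h Q"
      using c assms(4-6) by (intro take_flip_eq)
    then show ?thesis
      using flip_in_N1[OF light_P] lc assms(4,5)
      by (intro that[of "P[c := \<not> P ! c]" Q]) (auto simp: le_LCP_iff N1_def)
  next
    case light_Q
    have "take h (Q[c := \<not> Q ! c]) = take h P"
      using c assms(4-6) by (intro take_flip_eq) (auto simp: hamming_commute)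
    then show ?thesis
      using flip_in_N1[OF light_Q] lc assms(4,5)
      by (intro that[of P "Q[c := \<not> Q ! c]"]) (auto simp: le_LCP_iff N1_def)
  qed
qed

(* The 0-based cut position a corresponds to the paper's 1-based position a + 1. *)
lemma Pairs_memI: "Suc a \<in> S \<Longrightarrow> a < length X \<Longrightarrow> (rev (take a X), drop a X) \<in> Pairs S X"
  unfolding Pairs_def by (intro CollectI exI[of _ "Suc a"]) simp

lemma is_cover_anchor:
  assumes "is_cover d S"
  obtains h where "h < d" "Suc (i + h) \<in> S" "Suc (j + h) \<in> S"
proof -
  obtain H where H: "\<forall>i\<ge>1. \<forall>j\<ge>1. H i j < d \<and> i + H i j \<in> S \<and> j + H i j \<in> S"
    using assms unfolding is_cover_def by blast
  have "H (Suc i) (Suc j) < d \<and> Suc i + H (Suc i) (Suc j) \<in> S \<and> Suc j + H (Suc i) (Suc j) \<in> S"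
    using H[rule_format, of "Suc i" "Suc j"] by simp
  then show ?thesis
    by (intro that[of "H (Suc i) (Suc j)"]) simp_all
qed

lemma comps_memI: "(U1, U2) \<in> P \<Longrightarrow> U1 \<in> comps P \<and> U2 \<in> comps P"
  unfolding comps_def by force

lemma LCP_sum_le_max_maxPairLCP:
  assumes "(P1, P2) \<in> PairsD L S X 0 \<and> (Q1, Q2) \<in> PairsD L S Y 1 \<or>
           (P1, P2) \<in> PairsD L S X 1 \<and> (Q1, Q2) \<in> PairsD L S Y 0"
  shows "LCP P1 Q1 + LCP P2 Q2 \<le> max (maxPairLCP (PairsD L S X 0) (PairsD L S Y 1))
                                       (maxPairLCP (PairsD L S X 1) (PairsD L S Y 0))"
  using assms
proof
  assume "(P1, P2) \<in> PairsD L S X 0 \<and> (Q1, Q2) \<in> PairsD L S Y 1"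
  then show ?thesis
    using maxPairLCP_PairsD_bounds(1)[of P1 P2 L S X 0 Q1 Q2 Y 1] by linarith
next
  assume "(P1, P2) \<in> PairsD L S X 1 \<and> (Q1, Q2) \<in> PairsD L S Y 0"
  then show ?thesis
    using maxPairLCP_PairsD_bounds(1)[of P1 P2 L S X 1 Q1 Q2 Y 0] by linarith
qed

lemma PairsD_N1_snd_choice:
  assumes "(U1, U2) \<in> Pairs S U" "(V1, V2) \<in> Pairs S V"
    and "U2' \<in> N1 L U2" "V2' \<in> N1 L V2" "U2' = U2 \<or> V2' = V2"
  shows "(U1, U2') \<in> PairsD L S U 0 \<and> (V1, V2') \<in> PairsD L S V 1 \<or>
         (U1, U2') \<in> PairsD L S U 1 \<and> (V1, V2') \<in> PairsD L S V 0"
  using assms(5)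
proof
  assume "U2' = U2"
  then have "(U1, U2') \<in> PairsD L S U 0"
    using assms(1) Pairs_subset_PairsD by blast
  with PairsD_N1_snd[OF assms(2,4)] show ?thesis by blast
next
  assume "V2' = V2"
  then have "(V1, V2') \<in> PairsD L S V 0"
    using assms(2) Pairs_subset_PairsD by blast
  with PairsD_N1_snd[OF assms(1,3)] show ?thesis by blast
qed

lemma PairsD_N1_fst_choice:
  assumes "(U1, U2) \<in> Pairs S U" "(V1, V2) \<in> Pairs S V"
    and "U1' \<in> N1 L U1" "V1' \<in> N1 L V1" "U1' = U1 \<or> V1' = V1"
  shows "(U1', U2) \<in> PairsD L S U 0 \<and> (V1', V2) \<in> PairsD L S V 1 \<or>
         (U1', U2) \<in> PairsD L S U 1 \<and> (V1', V2) \<in> PairsD L S V 0"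
  using assms(5)
proof
  assume "U1' = U1"
  then have "(U1', U2) \<in> PairsD L S U 0"
    using assms(1) Pairs_subset_PairsD by blast
  with PairsD_N1_fst[OF assms(2,4)] show ?thesis by blast
next
  assume "V1' = V1"
  then have "(V1', V2) \<in> PairsD L S V 0"
    using assms(2) Pairs_subset_PairsD by blast
  with PairsD_N1_fst[OF assms(1,3)] show ?thesis by blast
qed

lemma split_le_max_maxPairLCP:
  fixes X Y :: "bool list"
  assumes light: "valid_light (comps (Pairs S X \<union> Pairs S Y)) L"
    and PX: "(P1, P2) \<in> Pairs S X" and QY: "(Q1, Q2) \<in> Pairs S Y"
    and lens: "s \<le> length P1" "s \<le> length Q1" "t \<le> length P2" "t \<le> length Q2"
    and mismatches: "hamming (take s P1) (take s Q1) + hamming (take t P2) (take t Q2) \<le> 1"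
  shows "s + t \<le> max (maxPairLCP (PairsD L S X 0) (PairsD L S Y 1))
                       (maxPairLCP (PairsD L S X 1) (PairsD L S Y 0))"
proof -
  let ?F = "comps (Pairs S X \<union> Pairs S Y)"
  have inF: "P1 \<in> ?F" "P2 \<in> ?F" "Q1 \<in> ?F" "Q2 \<in> ?F"
    using comps_memI[of P1 P2] comps_memI[of Q1 Q2] PX QY by blast+
  consider "take s P1 = take s Q1" "hamming (take t P2) (take t Q2) \<le> 1"
    | "take t P2 = take t Q2" "hamming (take s P1) (take s Q1) \<le> 1"
    using mismatches lens hamming_eq_0_iff[of "take s P1" "take s Q1"]
      hamming_eq_0_iff[of "take t P2" "take t Q2"] by fastforce
  then show ?thesis
  proof cases
    case 1
    obtain P2' Q2' where flip: "P2' \<in> N1 L P2" "Q2' \<in> N1 L Q2" "P2' = P2 \<or> Q2' = Q2"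
        and "t \<le> LCP P2' Q2'"
      using N1_flip_LCP[OF light inF(2,4) lens(3,4) 1(2)] .
    moreover have "s \<le> LCP P1 Q1"
      using 1(1) lens by (simp add: le_LCP_iff)
    ultimately show ?thesis
      using LCP_sum_le_max_maxPairLCP[OF PairsD_N1_snd_choice[OF PX QY flip]] by linarith
  next
    case 2
    obtain P1' Q1' where flip: "P1' \<in> N1 L P1" "Q1' \<in> N1 L Q1" "P1' = P1 \<or> Q1' = Q1"
        and "s \<le> LCP P1' Q1'"
      using N1_flip_LCP[OF light inF(1,3) lens(1,2) 2(2)] .
    moreover have "t \<le> LCP P2 Q2"
      using 2(1) lens by (simp add: le_LCP_iff)
    ultimately show ?thesis
      using LCP_sum_le_max_maxPairLCP[OF PairsD_N1_fst_choice[OF PX QY flip]] by linarith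
  qed
qed

theorem corollary6:
  fixes X Y :: "bool list" and l :: nat and S :: "nat set"
    and L :: "(bool list \<times> bool list) set"
  assumes "l \<ge> 1"
    and "is_cover l S"
    and "valid_light (comps (Pairs S X \<union> Pairs S Y)) L"
    and "LCF 1 X Y \<ge> l"
  shows "LCF 1 X Y = max (maxPairLCP (PairsD L S X 0) (PairsD L S Y 1))
                         (maxPairLCP (PairsD L S X 1) (PairsD L S Y 0))"
proof -
  define m where "m = LCF 1 X Y"
  obtain i j where win: "i + m \<le> length X" "j + m \<le> length Y"
    "hamming (take m (drop i X)) (take m (drop j Y)) \<le> 1"
    using LCF_attained unfolding m_def by blast
  obtain h where "h < l" and anchors: "Suc (i + h) \<in> S" "Suc (j + h) \<in> S"
    using is_cover_anchor[OF assms(2)] .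
  with assms(4) have h: "h < m"
    unfolding m_def by linarith
  have PX: "(rev (take (i + h) X), drop (i + h) X) \<in> Pairs S X"
    and QY: "(rev (take (j + h) Y), drop (j + h) Y) \<in> Pairs S Y"
    using h anchors win by (auto intro!: Pairs_memI)
  have "hamming (take h (rev (take (i + h) X))) (take h (rev (take (j + h) Y))) +
        hamming (take (m - h) (drop (i + h) X)) (take (m - h) (drop (j + h) Y)) \<le> 1"
    using hamming_window_split[of h "i + h" X "j + h" Y "m - h"] win h by simp
  then have "h + (m - h) \<le> max (maxPairLCP (PairsD L S X 0) (PairsD L S Y 1))
                                (maxPairLCP (PairsD L S X 1) (PairsD L S Y 0))"
    by (rule split_le_max_maxPairLCP[OF assms(3) PX QY, rotated 4]) (use win h in simp_all)
  moreover have "maxPairLCP (PairsD L S X 0) (PairsD L S Y 1) \<le> m"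
    and "maxPairLCP (PairsD L S X 1) (PairsD L S Y 0) \<le> m"
    using maxPairLCP_PairsD_bounds(2)[OF subsetD[OF Pairs_subset_PairsD PX]
        subsetD[OF Pairs_subset_PairsD QY], of L 0 1]
      maxPairLCP_PairsD_bounds(2)[OF subsetD[OF Pairs_subset_PairsD PX]
        subsetD[OF Pairs_subset_PairsD QY], of L 1 0]
    unfolding m_def by simp_all
  ultimately show ?thesis
    using h unfolding m_def by linarith
qed

end
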